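(* Let $K=\mathrm{SU}(2)$, $\mathcal{M}=\{(g_1,h_1,g_2,h_2)\in K^4:[g_1,h_1][g_2,h_2]=I\}/K$, and set $P_1=\{[a;b;b;a]: a,b\in K,\ [a,b]=I\}$ and $P_2=\{[a;b;b^{-1};a^{-1}]: a,b\in K,\ [a,b]=I\}$. For a commuting pair $(g,h)\in K^2$ let $$I_{(g,h)}=\{[g;h;khk^{-1};kgk^{-1}] : k\in K,\ k^2=-I\}\subset\mathcal{M}.$$ (1) If $(g,h)\notin\{(\pm I,\pm I)\}$, then $I_{(g,h)}\cong S^2/S^1$ is a closed interval: there is a homeomorphism $\mathfrak{I}_{(g,h)}:[0,1]\to I_{(g,h)}$ with $\mathfrak{I}_{(g,h)}(0)\in P_1$ (namely $[g;h;h;g]$), $\mathfrak{I}_{(g,h)}(1)\in P_2$ (namely $[g;h;h^{-1};g^{-1}]$), and $\mathfrak{I}_{(g,h)}(t)\notin P_1\cup P_2$ for all $t\in(0,1)$. (2) If $(g,h)=(\pm I,\pm I)$, then $I_{(g,h)}$ is a single point, one of $[I;I;I;I]$, $[I;-I;-I;I]$, $[-I;I;I;-I]$, $[-I;-I;-I;-I]$.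
   Context: $[a,b]=aba^{-1}b^{-1}$; $K$ acts by simultaneous conjugation and $[g_1;h_1;g_2;h_2]$ denotes a class in $\mathcal{M}$ (quotient topology). $P_1$ is the boundary surface of the "Goldman pillow" $\{[a;b;b;a]\}$ and $P_2$ the boundary surface of the second pillow $\{[a;b;kbk^{-1};kak^{-1}]: k^2=-I, [a,b]\text{ commutes with }k\}$ appearing in the fixed set of the involution $[g_1;h_1;g_2;h_2]\mapsto[h_2;g_2;h_1;g_1]$. *)

theory Defs
  imports "HOL-Analysis.Analysis"
begin

type_synonym cmat = "complex^2^2"

definition cadj :: "cmat \<Rightarrow> cmat" where
  "cadj A = (\<chi> i j. cnj (A $ j $ i))"

definition SU2 :: "cmat set" where
  "SU2 = {A. A ** cadj A = mat 1 \<and> det A = 1}"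

definition comm :: "cmat \<Rightarrow> cmat \<Rightarrow> cmat" where
  "comm a b = a ** b ** matrix_inv a ** matrix_inv b"

type_synonym quad = "cmat \<times> cmat \<times> cmat \<times> cmat"

definition RepSp :: "quad set" where
  "RepSp = {(g1, h1, g2, h2). g1 \<in> SU2 \<and> h1 \<in> SU2 \<and> g2 \<in> SU2 \<and> h2 \<in> SU2 \<and>
              comm g1 h1 ** comm g2 h2 = mat 1}"

definition conjq :: "cmat \<Rightarrow> quad \<Rightarrow> quad" where
  "conjq k q = (case q of (g1, h1, g2, h2) \<Rightarrow>
     (k ** g1 ** matrix_inv k, k ** h1 ** matrix_inv k,
      k ** g2 ** matrix_inv k, k ** h2 ** matrix_inv k))"

text \<open>The class [g1;h1;g2;h2] in M: the K-orbit of the quadruple.\<close>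
definition cls :: "quad \<Rightarrow> quad set" where
  "cls q = {conjq k q | k. k \<in> SU2}"

definition quotient_top :: "'a topology \<Rightarrow> ('a \<Rightarrow> 'b) \<Rightarrow> 'b topology" where
  "quotient_top X p =
     topology (\<lambda>U. U \<subseteq> p ` topspace X \<and> openin X {x \<in> topspace X. p x \<in> U})"

definition Mtop :: "quad set topology" where
  "Mtop = quotient_top (top_of_set RepSp) cls"

definition P1 :: "quad set set" where
  "P1 = {cls (a, b, b, a) | a b. a \<in> SU2 \<and> b \<in> SU2 \<and> comm a b = mat 1}"

definition P2 :: "quad set set" where
  "P2 = {cls (a, b, matrix_inv b, matrix_inv a) | a b.
           a \<in> SU2 \<and> b \<in> SU2 \<and> comm a b = mat 1}"

definition Iseg :: "cmat \<Rightarrow> cmat \<Rightarrow> quad set set" where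
  "Iseg g h = {cls (g, h, k ** h ** matrix_inv k, k ** g ** matrix_inv k) | k.
                 k \<in> SU2 \<and> k ** k = - mat 1}"

end

(*
  Commuting g, h in SU(2) are simultaneously conjugate to diagonal matrices diag(p, cnj p),
  diag(q, cnj q), and the segment I_(g,h) only depends on the conjugacy class of the pair.
  For diagonal g, h, an element k of SU(2) with k^2 = -I is a purely imaginary unit quaternion,
  with off-diagonal entry w say, and a further conjugation by a diagonal matrix rotates w while
  fixing g and h; so the points of I_(g,h) are the classes parametrised by t = |w|^2 in [0,1],
  running from [g;h;h;g] at t = 0 to [g;h;h^-1;g^-1] at t = 1.  The conjugation-invariant
  function Re tr(g1 h2) + Re tr(h1 g2) equals 4 - 4(1 - t)((Im p)^2 + (Im q)^2) along this
  path.  Unless g and h are both central it is therefore a continuous inverse of the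
  parametrisation, and it also separates the interior points from the two pillows P1 and P2.
  If g and h are both central, every k fixes them and I_(g,h) is a single point.
*)

theory Submission
  imports Defs
begin

section \<open>Explicit 2x2 matrices and SU(2)\<close>

definition mat2 :: "complex \<Rightarrow> complex \<Rightarrow> complex \<Rightarrow> complex \<Rightarrow> cmat" where
  "mat2 a b c d = (\<chi> i j. if i = 1 then (if j = 1 then a else b) else (if j = 1 then c else d))"

lemma mat2_nth [simp]:
  "mat2 a b c d $ 1 $ 1 = a" "mat2 a b c d $ 1 $ 2 = b"
  "mat2 a b c d $ 2 $ 1 = c" "mat2 a b c d $ 2 $ 2 = d"
  by (simp_all add: mat2_def)

lemma mat2_entries: "A = mat2 (A$1$1) (A$1$2) (A$2$1) (A$2$2)"
  unfolding mat2_def by (simp add: vec_eq_iff forall_2)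

lemma mat2_cases: obtains a b c d where "A = mat2 a b c d"
  using mat2_entries by blast

lemma mat2_eq_iff [simp]:
  "mat2 a b c d = mat2 a' b' c' d' \<longleftrightarrow> a = a' \<and> b = b' \<and> c = c' \<and> d = d'"
  by (metis mat2_nth)

lemma mat2_mult [simp]:
  "mat2 a b c d ** mat2 e f g h = mat2 (a*e+b*g) (a*f+b*h) (c*e+d*g) (c*f+d*h)"
  by (subst mat2_entries) (simp add: matrix_matrix_mult_def sum_2)

lemma mat_1_eq_mat2: "mat 1 = mat2 1 0 0 1"
  by (subst mat2_entries) (simp add: mat_def)

lemma uminus_mat2 [simp]: "- mat2 a b c d = mat2 (-a) (-b) (-c) (-d)"
  by (subst mat2_entries) simp

lemma det_mat2 [simp]: "det (mat2 a b c d) = a*d - b*c"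
  by (simp add: det_2)

lemma cadj_mat2 [simp]: "cadj (mat2 a b c d) = mat2 (cnj a) (cnj c) (cnj b) (cnj d)"
  by (subst mat2_entries) (simp add: cadj_def)

lemma matrix_mul_uminus:
  "(A::cmat) ** (- (B::cmat)) = - (A ** B)" "(- A) ** B = - (A ** B)"
  by (cases A rule: mat2_cases, cases B rule: mat2_cases, simp)+

lemma cadj_matrix_mul: "cadj (A ** B) = cadj B ** cadj A"
  by (cases A rule: mat2_cases, cases B rule: mat2_cases) (simp add: mult.commute)

lemma SU2_iff_mat2:
  "A \<in> SU2 \<longleftrightarrow> (\<exists>a b. A = mat2 a b (- cnj b) (cnj a) \<and> a * cnj a + b * cnj b = 1)"
proof
  assume "A \<in> SU2"
  obtain a b c d where A: "A = mat2 a b c d" by (rule mat2_cases)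
  from \<open>A \<in> SU2\<close> have e: "a * cnj a + b * cnj b = 1" "c * cnj a + d * cnj b = 0" "a*d - b*c = 1"
    by (auto simp: SU2_def A mat_1_eq_mat2)
  have "d = cnj a" "c = - cnj b" using e by algebra+
  then show "\<exists>a b. A = mat2 a b (- cnj b) (cnj a) \<and> a * cnj a + b * cnj b = 1"
    using A e by auto
next
  assume "\<exists>a b. A = mat2 a b (- cnj b) (cnj a) \<and> a * cnj a + b * cnj b = 1"
  then show "A \<in> SU2" by (auto simp: SU2_def mat_1_eq_mat2 algebra_simps)
qed

lemma SU2_mat2: "a * cnj a + b * cnj b = 1 \<Longrightarrow> mat2 a b (- cnj b) (cnj a) \<in> SU2"
  using SU2_iff_mat2 by blast

lemma SU2_mult_cadj: "A \<in> SU2 \<Longrightarrow> A ** cadj A = mat 1"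
  by (simp add: SU2_def)

lemma SU2_cadj_mult: "A \<in> SU2 \<Longrightarrow> cadj A ** A = mat 1"
  unfolding SU2_iff_mat2 by (auto simp: mat_1_eq_mat2 algebra_simps)

lemma matrix_inv_SU2: "A \<in> SU2 \<Longrightarrow> matrix_inv A = cadj A"
proof -
  assume "A \<in> SU2"
  then have inv: "A ** cadj A = mat 1 \<and> cadj A ** A = mat 1"
    using SU2_mult_cadj SU2_cadj_mult by blast
  then have "A ** B = mat 1 \<and> B ** A = mat 1 \<Longrightarrow> B = cadj A" for B
    by (metis matrix_mul_assoc matrix_mul_lid matrix_mul_rid)
  then show ?thesis unfolding matrix_inv_def by (metis (mono_tags, lifting) inv someI)
qed

lemma SU2_mult: "A \<in> SU2 \<Longrightarrow> B \<in> SU2 \<Longrightarrow> A ** B \<in> SU2"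
  unfolding SU2_def by (auto simp: cadj_matrix_mul det_mul matrix_mul_assoc)
    (metis matrix_mul_assoc matrix_mul_rid)

lemma SU2_cadj: "A \<in> SU2 \<Longrightarrow> cadj A \<in> SU2"
proof -
  assume "A \<in> SU2"
  then obtain a b where A: "A = mat2 a b (- cnj b) (cnj a)" "a * cnj a + b * cnj b = 1"
    unfolding SU2_iff_mat2 by blast
  then have "cadj A = mat2 (cnj a) (- b) (- cnj (- b)) (cnj (cnj a))"
    and "cnj a * cnj (cnj a) + (- b) * cnj (- b) = 1"
    by (simp_all add: algebra_simps)
  then show ?thesis using SU2_mat2 by metis
qed

lemma SU2_one: "mat 1 \<in> SU2"
  by (simp add: SU2_def mat_1_eq_mat2)

lemma SU2_matrix_inv: "A \<in> SU2 \<Longrightarrow> matrix_inv A \<in> SU2"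
  by (simp add: matrix_inv_SU2 SU2_cadj)

lemma SU2_right_inverse: "A \<in> SU2 \<Longrightarrow> A ** matrix_inv A = mat 1"
  by (simp add: matrix_inv_SU2 SU2_mult_cadj)

lemma SU2_left_inverse: "A \<in> SU2 \<Longrightarrow> matrix_inv A ** A = mat 1"
  by (simp add: matrix_inv_SU2 SU2_cadj_mult)

lemma matrix_inv_mult_SU2:
  "A \<in> SU2 \<Longrightarrow> B \<in> SU2 \<Longrightarrow> matrix_inv (A ** B) = matrix_inv B ** matrix_inv A"
  by (simp add: matrix_inv_SU2 SU2_mult cadj_matrix_mul)

lemma matrix_inv_matrix_inv_SU2: "A \<in> SU2 \<Longrightarrow> matrix_inv (matrix_inv A) = A"
  by (simp add: matrix_inv_SU2 SU2_cadj) (cases A rule: mat2_cases, simp)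

lemma SU2_inverse_cancel:
  "A \<in> SU2 \<Longrightarrow> matrix_inv A ** (A ** (B::cmat)) = B"
  "A \<in> SU2 \<Longrightarrow> A ** (matrix_inv A ** (B::cmat)) = B"
  by (simp_all add: SU2_left_inverse SU2_right_inverse matrix_mul_assoc)

lemma comm_eq_one_iff:
  assumes "a \<in> SU2" "b \<in> SU2"
  shows "comm a b = mat 1 \<longleftrightarrow> a ** b = b ** a"
proof -
  have "comm a b ** (b ** a) = a ** b"
    using assms unfolding comm_def by (simp add: SU2_inverse_cancel SU2_left_inverse flip: matrix_mul_assoc)
  moreover have "b ** a ** matrix_inv a ** matrix_inv b = mat 1"
    using assms by (simp add: SU2_inverse_cancel SU2_right_inverse flip: matrix_mul_assoc)
  ultimately show ?thesis
    unfolding comm_def by (metis matrix_mul_lid)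
qed

definition conjm :: "cmat \<Rightarrow> cmat \<Rightarrow> cmat" where
  "conjm k A = k ** A ** matrix_inv k"

lemma conjq_conv_conjm [simp]:
  "conjq k (a, b, c, d) = (conjm k a, conjm k b, conjm k c, conjm k d)"
  by (simp add: conjq_def conjm_def)

lemma conjm_mult: "k \<in> SU2 \<Longrightarrow> conjm k (A ** B) = conjm k A ** conjm k B"
  unfolding conjm_def by (simp add: SU2_inverse_cancel flip: matrix_mul_assoc)

lemma conjm_conjm: "k \<in> SU2 \<Longrightarrow> u \<in> SU2 \<Longrightarrow> conjm k (conjm u A) = conjm (k ** u) A"
  unfolding conjm_def by (simp add: matrix_inv_mult_SU2 matrix_mul_assoc)

lemma conjm_one [simp]: "conjm (mat 1) A = A"
proof -
  have "matrix_inv (mat 1 :: cmat) = mat 1"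
    using matrix_inv_SU2[OF SU2_one] by (simp add: mat_1_eq_mat2)
  then show ?thesis unfolding conjm_def by simp
qed

lemma SU2_conjm: "k \<in> SU2 \<Longrightarrow> A \<in> SU2 \<Longrightarrow> conjm k A \<in> SU2"
  unfolding conjm_def by (simp add: SU2_mult SU2_matrix_inv)

lemma conjm_matrix_inv:
  "k \<in> SU2 \<Longrightarrow> A \<in> SU2 \<Longrightarrow> conjm k (matrix_inv A) = matrix_inv (conjm k A)"
  unfolding conjm_def
  by (simp add: matrix_inv_mult_SU2 SU2_mult SU2_matrix_inv matrix_inv_matrix_inv_SU2 matrix_mul_assoc)

lemma conjm_inverse:
  "k \<in> SU2 \<Longrightarrow> conjm (matrix_inv k) (conjm k A) = A"
  "k \<in> SU2 \<Longrightarrow> conjm k (conjm (matrix_inv k) A) = A"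
  by (simp_all add: conjm_conjm SU2_matrix_inv SU2_left_inverse SU2_right_inverse)

lemma conjm_central:
  "k \<in> SU2 \<Longrightarrow> conjm k (mat 1) = mat 1"
  "k \<in> SU2 \<Longrightarrow> conjm k (- mat 1) = - mat 1"
  unfolding conjm_def by (simp_all add: SU2_right_inverse matrix_mul_uminus)

lemma conjq_conjq: "k \<in> SU2 \<Longrightarrow> u \<in> SU2 \<Longrightarrow> conjq k (conjq u q) = conjq (k ** u) q"
  by (cases q rule: prod_cases4) (simp add: conjm_conjm)

lemma cls_self: "q \<in> cls q"
proof -
  have "q = conjq (mat 1) q" by (cases q rule: prod_cases4) simp
  then show ?thesis unfolding cls_def using SU2_one by blast
qed

lemma cls_conjq:
  assumes "u \<in> SU2"
  shows "cls (conjq u q) = cls q"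
proof
  show "cls (conjq u q) \<subseteq> cls q"
    unfolding cls_def using assms by (auto simp: conjq_conjq intro!: SU2_mult)
  show "cls q \<subseteq> cls (conjq u q)"
  proof
    fix x assume "x \<in> cls q"
    then obtain k where k: "k \<in> SU2" "x = conjq k q" unfolding cls_def by blast
    then have "x = conjq (k ** matrix_inv u) (conjq u q)"
      using assms
      by (simp add: conjq_conjq SU2_matrix_inv SU2_mult SU2_left_inverse flip: matrix_mul_assoc)
    then show "x \<in> cls (conjq u q)"
      unfolding cls_def using k assms SU2_matrix_inv SU2_mult by blast
  qed
qed

lemma cls_eq_imp_conjq: "cls q = cls q' \<Longrightarrow> \<exists>m\<in>SU2. q = conjq m q'"
  using cls_self[of q] unfolding cls_def by auto

lemma cls_in_P1_imp:
  assumes "cls (g1, h1, g2, h2) \<in> P1"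
  shows "g2 = h1 \<and> h2 = g1"
proof -
  obtain a b m where "m \<in> SU2" and "(g1, h1, g2, h2) = conjq m (a, b, b, a)"
    using assms cls_eq_imp_conjq unfolding P1_def by blast
  then show ?thesis by simp
qed

lemma cls_in_P2_imp:
  assumes "cls (g1, h1, g2, h2) \<in> P2"
  shows "g2 = matrix_inv h1 \<and> h2 = matrix_inv g1"
proof -
  obtain a b m where "a \<in> SU2" "b \<in> SU2" "m \<in> SU2"
    and "(g1, h1, g2, h2) = conjq m (a, b, matrix_inv b, matrix_inv a)"
    using assms cls_eq_imp_conjq unfolding P2_def by blast
  then show ?thesis by (simp add: conjm_matrix_inv)
qed

lemma RepSp_conjm_swap:
  assumes "g \<in> SU2" "h \<in> SU2" "g ** h = h ** g" "k \<in> SU2"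
  shows "(g, h, conjm k h, conjm k g) \<in> RepSp"
proof -
  have "conjm k h ** conjm k g = conjm k g ** conjm k h"
    using assms by (simp flip: conjm_mult)
  then have "comm (conjm k h) (conjm k g) = mat 1"
    using assms SU2_conjm comm_eq_one_iff by blast
  moreover have "comm g h = mat 1" using assms comm_eq_one_iff by blast
  ultimately show ?thesis
    using assms SU2_conjm unfolding RepSp_def by simp
qed

lemma istopology_quotient:
  "istopology (\<lambda>U. U \<subseteq> p ` topspace X \<and> openin X {x \<in> topspace X. p x \<in> U})"
proof (simp only: istopology_def, rule conjI; intro allI impI)
  fix S T assume "S \<subseteq> p ` topspace X \<and> openin X {x \<in> topspace X. p x \<in> S}"
    and "T \<subseteq> p ` topspace X \<and> openin X {x \<in> topspace X. p x \<in> T}"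
  moreover have "{x \<in> topspace X. p x \<in> S \<inter> T}
      = {x \<in> topspace X. p x \<in> S} \<inter> {x \<in> topspace X. p x \<in> T}" by auto
  ultimately show "S \<inter> T \<subseteq> p ` topspace X \<and> openin X {x \<in> topspace X. p x \<in> S \<inter> T}"
    by auto
next
  fix \<K> assume K: "\<forall>K\<in>\<K>. K \<subseteq> p ` topspace X \<and> openin X {x \<in> topspace X. p x \<in> K}"
  have "{x \<in> topspace X. p x \<in> \<Union>\<K>} = (\<Union>K\<in>\<K>. {x \<in> topspace X. p x \<in> K})" by auto
  then show "\<Union>\<K> \<subseteq> p ` topspace X \<and> openin X {x \<in> topspace X. p x \<in> \<Union>\<K>}"
    using K by auto
qed

lemma openin_quotient_top:
  "openin (quotient_top X p) U \<longleftrightarrow>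
     U \<subseteq> p ` topspace X \<and> openin X {x \<in> topspace X. p x \<in> U}"
  unfolding quotient_top_def using topology_inverse'[OF istopology_quotient[of p X]] by simp

lemma topspace_quotient_top: "topspace (quotient_top X p) = p ` topspace X"
proof
  show "topspace (quotient_top X p) \<subseteq> p ` topspace X"
    unfolding topspace_def openin_quotient_top by auto
  have "{x \<in> topspace X. p x \<in> p ` topspace X} = topspace X" by auto
  then have "openin (quotient_top X p) (p ` topspace X)"
    unfolding openin_quotient_top by simp
  then show "p ` topspace X \<subseteq> topspace (quotient_top X p)" by (rule openin_subset)
qed

lemma continuous_map_quotient_top: "continuous_map X (quotient_top X p) p"
  unfolding continuous_map_def topspace_quotient_top openin_quotient_top by auto

lemma continuous_map_from_quotient_top:
  assumes F: "continuous_map X Y F" and G: "\<And>x. x \<in> topspace X \<Longrightarrow> G (p x) = F x"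
  shows "continuous_map (quotient_top X p) Y G"
  unfolding continuous_map_def topspace_quotient_top openin_quotient_top
proof (intro conjI allI impI)
  show "G \<in> p ` topspace X \<rightarrow> topspace Y"
    using G F continuous_map_funspace by fastforce
  fix U assume "openin Y U"
  show "{c \<in> p ` topspace X. G c \<in> U} \<subseteq> p ` topspace X" by blast
  have "{x \<in> topspace X. p x \<in> {c \<in> p ` topspace X. G c \<in> U}}
      = {x \<in> topspace X. F x \<in> U}" using G by auto (metis G)
  then show "openin X {x \<in> topspace X. p x \<in> {c \<in> p ` topspace X. G c \<in> U}}"
    using openin_continuous_map_preimage[OF F \<open>openin Y U\<close>] by simp
qed

lemma homeomorphic_map_onto_image_left_inverse:
  assumes f: "continuous_map (subtopology Z T) Y f" and g: "continuous_map Y Z g"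
    and gf: "\<And>x. x \<in> T \<Longrightarrow> g (f x) = x" and T: "T \<subseteq> topspace Z"
  shows "homeomorphic_map (subtopology Z T) (subtopology Y (f ` T)) f"
  unfolding homeomorphic_map_maps homeomorphic_maps_def
proof (intro exI[of _ g] conjI ballI)
  show "continuous_map (subtopology Z T) (subtopology Y (f ` T)) f"
    using f T by (auto intro: continuous_map_into_subtopology)
  show "continuous_map (subtopology Y (f ` T)) (subtopology Z T) g"
    by (rule continuous_map_into_subtopology[OF continuous_map_from_subtopology[OF g]])
      (use gf in auto)
qed (use gf T in auto)

section \<open>A conjugation-invariant function on the moduli space\<close>

definition trace2 :: "cmat \<Rightarrow> complex" where
  "trace2 A = A$1$1 + A$2$2"

lemma trace2_mult: "trace2 ((A::cmat) ** B) = A$1$1*B$1$1 + A$1$2*B$2$1 + A$2$1*B$1$2 + A$2$2*B$2$2"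
  by (cases A rule: mat2_cases, cases B rule: mat2_cases) (simp add: trace2_def algebra_simps)

lemma trace2_mult_commute: "trace2 (A ** B) = trace2 (B ** A)"
  by (simp add: trace2_mult algebra_simps)

lemma trace2_conjm_mult: "k \<in> SU2 \<Longrightarrow> trace2 (conjm k A ** conjm k B) = trace2 (A ** B)"
  unfolding conjm_mult[symmetric] conjm_def
  by (metis trace2_mult_commute SU2_inverse_cancel(1) matrix_mul_assoc)

definition trace_pairing :: "quad \<Rightarrow> real" where
  "trace_pairing q = (case q of (g1, h1, g2, h2) \<Rightarrow> Re (trace2 (g1 ** h2) + trace2 (h1 ** g2)))"

lemma trace_pairing_conjq: "k \<in> SU2 \<Longrightarrow> trace_pairing (conjq k q) = trace_pairing q"
  by (cases q rule: prod_cases4) (simp add: trace_pairing_def trace2_conjm_mult)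

lemma continuous_on_trace_pairing: "continuous_on S trace_pairing"
proof -
  have eq: "trace_pairing = (\<lambda>q. Re (trace2 (fst q ** snd (snd (snd q)))
                                 + trace2 (fst (snd q) ** fst (snd (snd q)))))"
    by (auto simp: trace_pairing_def fun_eq_iff split: prod.splits)
  show ?thesis unfolding eq trace2_mult by (intro continuous_intros)
qed

definition trace_pairing_cls :: "quad set \<Rightarrow> real" where
  "trace_pairing_cls c = trace_pairing (SOME q. q \<in> c)"

lemma trace_pairing_cls_cls: "trace_pairing_cls (cls q) = trace_pairing q"
proof -
  obtain m where "m \<in> SU2" "(SOME x. x \<in> cls q) = conjq m q"
    using someI[of "\<lambda>x. x \<in> cls q", OF cls_self] unfolding cls_def by blast
  then show ?thesis unfolding trace_pairing_cls_def by (simp add: trace_pairing_conjq)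
qed

lemma continuous_map_trace_pairing_cls: "continuous_map Mtop euclideanreal trace_pairing_cls"
  unfolding Mtop_def
  by (rule continuous_map_from_quotient_top[where F = trace_pairing])
    (simp_all add: continuous_on_trace_pairing trace_pairing_cls_cls)

definition diag_phase :: "complex \<Rightarrow> cmat" where
  "diag_phase p = mat2 p 0 0 (cnj p)"

lemma SU2_diag_phase_iff: "diag_phase p \<in> SU2 \<longleftrightarrow> p * cnj p = 1"
  unfolding diag_phase_def SU2_iff_mat2 by auto

lemma diag_phase_mult: "diag_phase p ** diag_phase q = diag_phase (p * q)"
  by (simp add: diag_phase_def)

lemma diag_phase_commute: "diag_phase p ** diag_phase q = diag_phase q ** diag_phase p"
  by (simp add: diag_phase_mult mult.commute)

lemma matrix_inv_diag_phase: "p * cnj p = 1 \<Longrightarrow> matrix_inv (diag_phase p) = diag_phase (cnj p)"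
  by (simp add: matrix_inv_SU2 SU2_diag_phase_iff) (simp add: diag_phase_def)

lemma diag_phase_one: "diag_phase 1 = mat 1" "diag_phase (-1) = - mat 1"
  by (simp_all add: diag_phase_def mat_1_eq_mat2)

lemma unit_complex_Re_Im: "p * cnj p = 1 \<Longrightarrow> (Re p)^2 + (Im p)^2 = 1"
  by (metis complex_mult_cnj of_real_eq_1_iff)

lemma unit_complex_real: "p * cnj p = 1 \<Longrightarrow> Im p = 0 \<Longrightarrow> p = 1 \<or> p = -1"
  using unit_complex_Re_Im[of p] by (auto simp: complex_eq_iff power2_eq_1_iff)

definition pure_quat :: "real \<Rightarrow> complex \<Rightarrow> cmat" where
  "pure_quat x w = mat2 (\<i> * of_real x) w (- cnj w) (- (\<i> * of_real x))"

lemma of_real_square_add_mult_cnj: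
  "x^2 + (cmod w)^2 = 1 \<Longrightarrow> of_real (x^2) + w * cnj w = 1"
  by (metis complex_norm_square of_real_1 of_real_add mult.commute)

lemma SU2_pure_quat: "x^2 + (cmod w)^2 = 1 \<Longrightarrow> pure_quat x w \<in> SU2"
proof -
  assume "x^2 + (cmod w)^2 = 1"
  moreover have "(\<i> * of_real x) * cnj (\<i> * of_real x) = complex_of_real (x^2)"
    by (simp add: power2_eq_square) (simp add: algebra_simps)
  ultimately have "(\<i> * of_real x) * cnj (\<i> * of_real x) + w * cnj w = 1"
    using of_real_square_add_mult_cnj by simp
  then show ?thesis unfolding pure_quat_def using SU2_mat2 by fastforce
qed

lemma pure_quat_square: "x^2 + (cmod w)^2 = 1 \<Longrightarrow> pure_quat x w ** pure_quat x w = - mat 1"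
proof -
  assume "x^2 + (cmod w)^2 = 1"
  then have e: "of_real (x^2) + w * cnj w = 1" by (rule of_real_square_add_mult_cnj)
  have "pure_quat x w ** pure_quat x w
      = mat2 (- (of_real (x^2) + w * cnj w)) 0 0 (- (of_real (x^2) + w * cnj w))"
    unfolding pure_quat_def by (simp add: algebra_simps power2_eq_square)
  also have "\<dots> = mat2 (-1) 0 0 (-1)" by (simp only: e)
  finally show ?thesis by (simp add: mat_1_eq_mat2)
qed

lemma square_eq_minus_one_SU2:
  assumes "k \<in> SU2" "k ** k = - mat 1"
  obtains x w where "k = pure_quat x w" "x^2 + (cmod w)^2 = 1"
proof -
  obtain a b where k: "k = mat2 a b (- cnj b) (cnj a)" "a * cnj a + b * cnj b = 1"
    using assms(1) unfolding SU2_iff_mat2 by blast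
  have "a * a - b * cnj b = -1" using assms(2) unfolding k(1) by (simp add: mat_1_eq_mat2)
  then have "a * (a + cnj a) = 0" using k(2) by algebra
  then have "Re a = 0" by (auto simp: complex_eq_iff)
  then have "k = pure_quat (Im a) b"
    using k unfolding pure_quat_def by (simp add: complex_eq_iff)
  moreover have "(Im a)^2 + (cmod b)^2 = 1"
  proof -
    have "complex_of_real ((cmod a)^2 + (cmod b)^2) = 1"
      using k(2) by (simp only: complex_norm_square of_real_add)
    moreover have "(cmod a)^2 = (Im a)^2" using \<open>Re a = 0\<close> by (simp add: cmod_power2)
    ultimately show ?thesis using of_real_eq_1_iff by metis
  qed
  ultimately show thesis by (rule that)
qed

definition rot_diag :: "real \<Rightarrow> complex \<Rightarrow> complex \<Rightarrow> cmat" where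
  "rot_diag x w q = mat2 (of_real (x^2) * q + w * cnj w * cnj q) (\<i> * of_real x * w * (cnj q - q))
                        (\<i> * of_real x * cnj w * (q - cnj q)) (w * cnj w * q + of_real (x^2) * cnj q)"

lemma conjm_pure_quat_diag_phase:
  "x^2 + (cmod w)^2 = 1 \<Longrightarrow> conjm (pure_quat x w) (diag_phase q) = rot_diag x w q"
  unfolding conjm_def matrix_inv_SU2[OF SU2_pure_quat]
  by (simp add: pure_quat_def diag_phase_def rot_diag_def algebra_simps power2_eq_square)

lemma rot_diag_minus: "rot_diag (-x) (-w) q = rot_diag x w q"
  unfolding rot_diag_def by simp

lemma rot_diag_1_0: "rot_diag 1 0 q = diag_phase q"
  by (simp add: rot_diag_def diag_phase_def)

lemma rot_diag_0_1: "rot_diag 0 1 q = diag_phase (cnj q)"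
  by (simp add: rot_diag_def diag_phase_def)

lemma conjm_diag_phase_diag_phase:
  "e * cnj e = 1 \<Longrightarrow> conjm (diag_phase e) (diag_phase p) = diag_phase p"
  unfolding conjm_def matrix_inv_diag_phase diag_phase_mult
  by (metis mult.commute mult.left_commute mult_1_right)

lemma conjm_diag_phase_rot_diag:
  assumes e: "e * cnj e = 1"
  shows "conjm (diag_phase e) (rot_diag y (of_real s) q) = rot_diag y (e^2 * of_real s) q"
proof -
  have "conjm (diag_phase e) (rot_diag y (of_real s) q)
      = diag_phase e ** rot_diag y (of_real s) q ** diag_phase (cnj e)"
    unfolding conjm_def using e by (simp add: matrix_inv_diag_phase)
  also have "\<dots> = rot_diag y (e^2 * of_real s) q"
    unfolding diag_phase_def rot_diag_def mat2_mult mat2_eq_iff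
    by (intro conjI; simp add: power2_eq_square; use e in algebra)
  finally show ?thesis .
qed

lemma Re_trace2_diag_phase_rot_diag:
  assumes p: "p * cnj p = 1" and xw: "x^2 + (cmod w)^2 = 1"
  shows "Re (trace2 (diag_phase p ** rot_diag x w p)) = 2 - 4 * x^2 * (Im p)^2"
proof -
  have "trace2 (diag_phase p ** rot_diag x w p)
      = p * (of_real (x^2) * p + of_real ((cmod w)^2) * cnj p)
        + cnj p * (of_real ((cmod w)^2) * p + of_real (x^2) * cnj p)"
    by (simp add: trace2_def diag_phase_def rot_diag_def flip: complex_norm_square)
  then have "Re (trace2 (diag_phase p ** rot_diag x w p))
      = x^2 * (2 * (Re p)^2 - 2 * (Im p)^2) + 2 * (cmod w)^2 * ((Re p)^2 + (Im p)^2)"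
    by (simp add: algebra_simps power2_eq_square)
  also have "\<dots> = 2 - 4 * x^2 * (Im p)^2"
  proof -
    have Re_p: "(Re p)^2 = 1 - (Im p)^2" and norm_w: "(cmod w)^2 = 1 - x^2"
      using unit_complex_Re_Im[OF p] xw by linarith+
    show ?thesis by (simp only: Re_p norm_w) algebra
  qed
  finally show ?thesis .
qed

lemma continuous_on_mat2:
  assumes "continuous_on S a" "continuous_on S b" "continuous_on S c" "continuous_on S d"
  shows "continuous_on S (\<lambda>t. mat2 (a t) (b t) (c t) (d t))"
  unfolding mat2_def
proof (intro continuous_on_vec_lambda)
  fix i j :: 2
  show "continuous_on S (\<lambda>t. if i = 1 then if j = 1 then a t else b t else if j = 1 then c t else d t)"
    using assms by (cases "i = 1"; cases "j = 1") simp_all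
qed

lemma continuous_on_rot_diag:
  "continuous_on S x \<Longrightarrow> continuous_on S w \<Longrightarrow> continuous_on S (\<lambda>t. rot_diag (x t) (w t) q)"
  unfolding rot_diag_def by (intro continuous_on_mat2 continuous_intros)

section \<open>Commuting elements of SU(2) are simultaneously diagonalisable\<close>

lemma SU2_conj_diag_phase:
  assumes "A \<in> SU2"
  obtains u l where "u \<in> SU2" "A = conjm u (diag_phase l)"
proof -
  obtain a b where A: "A = mat2 a b (- cnj b) (cnj a)" "a * cnj a + b * cnj b = 1"
    using assms unfolding SU2_iff_mat2 by blast
  show thesis
  proof (cases "b = 0")
    case True
    then show thesis using A that[of "mat 1" a] SU2_one by (simp add: diag_phase_def)
  next
    case False
    text \<open>The eigenvalue is \<open>Re a + i s\<close>, with eigenvector \<open>(b, i (s - Im a))\<close>.\<close>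
    define s where "s = sqrt ((Im a)^2 + (cmod b)^2)"
    have s2: "s^2 = (Im a)^2 + (Re b)^2 + (Im b)^2" unfolding s_def by (simp add: cmod_power2)
    define N where "N = (cmod b)^2 + (s - Im a)^2"
    have "N > 0" unfolding N_def using False by (simp add: add_pos_nonneg)
    define r where "r = 1 / sqrt N"
    have r2: "r^2 * N = 1" unfolding r_def using \<open>N > 0\<close> by (simp add: power_divide)
    define v where "v = \<i> * complex_of_real (s - Im a)"
    define u where "u = mat2 (r * b) (- (r * cnj v)) (r * v) (r * cnj b)"
    have "(r * b) * cnj (r * b) + (- (r * cnj v)) * cnj (- (r * cnj v)) = of_real (r^2 * N)"
      unfolding v_def N_def cmod_power2
      by (simp add: complex_eq_iff power2_eq_square algebra_simps)
    then have "u \<in> SU2"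
      using SU2_mat2[of "r * b" "- (r * cnj v)"] unfolding u_def r2 by simp
    moreover have "A ** u = u ** diag_phase (of_real (Re a) + \<i> * of_real s)"
      unfolding A(1) u_def diag_phase_def v_def mat2_mult mat2_eq_iff
      by (simp add: complex_eq_iff algebra_simps) (simp add: s2[unfolded power2_eq_square] algebra_simps)
    ultimately have "A = conjm u (diag_phase (of_real (Re a) + \<i> * of_real s))"
      unfolding conjm_def by (metis SU2_right_inverse matrix_mul_assoc matrix_mul_rid)
    then show thesis using \<open>u \<in> SU2\<close> that by blast
  qed
qed

lemma commuting_SU2_conj_diag_phase:
  assumes g: "g \<in> SU2" and h: "h \<in> SU2" and gh: "g ** h = h ** g"
  obtains u p q where "u \<in> SU2" "p * cnj p = 1" "q * cnj q = 1"
    "g = conjm u (diag_phase p)" "h = conjm u (diag_phase q)"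
proof -
  have unit: "l * cnj l = 1" if "u \<in> SU2" "A \<in> SU2" "A = conjm u (diag_phase l)" for A u l
    using that SU2_conjm[OF SU2_matrix_inv] conjm_inverse(1) SU2_diag_phase_iff by metis
  show thesis
  proof (cases "g = mat 1 \<or> g = - mat 1")
    case True
    obtain u l where u: "u \<in> SU2" "h = conjm u (diag_phase l)"
      using SU2_conj_diag_phase[OF h] .
    have "g = conjm u (diag_phase 1) \<or> g = conjm u (diag_phase (-1))"
      using True u conjm_central by (auto simp: diag_phase_one)
    moreover have "(1::complex) * cnj 1 = 1" "(-1::complex) * cnj (-1) = 1" by simp_all
    ultimately show thesis using that u unit[OF u(1) h u(2)] by metis
  next
    case False
    obtain u p where u: "u \<in> SU2" "g = conjm u (diag_phase p)"
      using SU2_conj_diag_phase[OF g] .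
    have p: "p * cnj p = 1" using unit[OF u(1) g u(2)] .
    have "p \<noteq> cnj p"
    proof
      assume "p = cnj p"
      then have "p = 1 \<or> p = -1" using unit_complex_real[OF p] by (simp add: complex_eq_iff)
      then show False using False u conjm_central by (auto simp: diag_phase_one)
    qed
    define h' where "h' = conjm (matrix_inv u) h"
    obtain a b where ab: "h' = mat2 a b (- cnj b) (cnj a)" "a * cnj a + b * cnj b = 1"
      using SU2_conjm[OF SU2_matrix_inv[OF u(1)] h] unfolding h'_def SU2_iff_mat2 by blast
    have "conjm (matrix_inv u) g = diag_phase p" using u conjm_inverse(1) by simp
    then have "diag_phase p ** h' = h' ** diag_phase p"
      using gh unfolding h'_def by (metis conjm_mult SU2_matrix_inv u(1))
    then have "p * b = b * cnj p" unfolding ab diag_phase_def by simp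
    then have "b = 0" using \<open>p \<noteq> cnj p\<close> by (metis mult.commute mult_cancel_left)
    then have "h = conjm u (diag_phase a)" and "a * cnj a = 1"
      using ab conjm_inverse(2)[OF u(1), of h] unfolding h'_def diag_phase_def by auto
    then show thesis using that u p by blast
  qed
qed

lemma Iseg_conv_conjm:
  "Iseg g h = {cls (g, h, conjm k h, conjm k g) | k. k \<in> SU2 \<and> k ** k = - mat 1}"
  unfolding Iseg_def conjm_def ..

lemma conjm_image_square_eq_minus_one:
  assumes "u \<in> SU2"
  shows "conjm u ` {k \<in> SU2. k ** k = - mat 1} = {k \<in> SU2. k ** k = - mat 1}"
proof -
  have sub: "conjm v ` {k \<in> SU2. k ** k = - mat 1} \<subseteq> {k \<in> SU2. k ** k = - mat 1}"
    if "v \<in> SU2" for v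
  proof (rule image_subsetI, clarify)
    fix k assume "k \<in> SU2" "k ** k = - mat 1"
    then show "conjm v k \<in> SU2 \<and> conjm v k ** conjm v k = - mat 1"
      using that by (metis SU2_conjm conjm_mult conjm_central(2))
  qed
  have "{k \<in> SU2. k ** k = - mat 1} \<subseteq> conjm u ` conjm (matrix_inv u) ` {k \<in> SU2. k ** k = - mat 1}"
    using conjm_inverse(2)[OF assms] by (auto simp: image_image)
  then show ?thesis using sub[OF assms] sub[OF SU2_matrix_inv[OF assms]] by blast
qed

lemma conjm_conjm_swap:
  assumes "u \<in> SU2" "k \<in> SU2"
  shows "conjm (conjm u k) (conjm u A) = conjm u (conjm k A)"
proof -
  have "conjm u k ** u = u ** k"
    using assms unfolding conjm_def by (simp add: SU2_left_inverse flip: matrix_mul_assoc)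
  then show ?thesis using assms by (simp add: conjm_conjm SU2_conjm)
qed

lemma Iseg_conjm:
  assumes u: "u \<in> SU2"
  shows "Iseg (conjm u g) (conjm u h) = Iseg g h"
proof -
  let ?R = "{k \<in> SU2. k ** k = - mat 1}"
  have Iseg_image: "Iseg a b = (\<lambda>k. cls (a, b, conjm k b, conjm k a)) ` ?R" for a b
    unfolding Iseg_conv_conjm by blast
  have "Iseg (conjm u g) (conjm u h)
      = (\<lambda>k. cls (conjm u g, conjm u h, conjm k (conjm u h), conjm k (conjm u g))) ` conjm u ` ?R"
    unfolding conjm_image_square_eq_minus_one[OF u] by (rule Iseg_image)
  also have "\<dots> = (\<lambda>k. cls (g, h, conjm k h, conjm k g)) ` ?R"
    unfolding image_image
  proof (rule image_cong[OF refl])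
    fix k assume "k \<in> ?R"
    then show "cls (conjm u g, conjm u h, conjm (conjm u k) (conjm u h), conjm (conjm u k) (conjm u g))
        = cls (g, h, conjm k h, conjm k g)"
      using cls_conjq[OF u, of "(g, h, conjm k h, conjm k g)"] by (simp add: conjm_conjm_swap u)
  qed
  also have "\<dots> = Iseg g h" by (rule Iseg_image[symmetric])
  finally show ?thesis .
qed

section \<open>The segment \<open>I_(g,h)\<close> for diagonal \<open>g\<close> and \<open>h\<close>\<close>

definition seg_quad :: "complex \<Rightarrow> complex \<Rightarrow> real \<Rightarrow> quad" where
  "seg_quad p q t = (diag_phase p, diag_phase q,
     rot_diag (sqrt (1 - t)) (of_real (sqrt t)) q, rot_diag (sqrt (1 - t)) (of_real (sqrt t)) p)"

lemma sqrt_segment_norm: "t \<in> {0..1} \<Longrightarrow> (sqrt (1 - t))^2 + (cmod (of_real (sqrt t)))^2 = 1"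
  by simp

lemma seg_quad_conv_conjm:
  "t \<in> {0..1} \<Longrightarrow> seg_quad p q t = (diag_phase p, diag_phase q,
     conjm (pure_quat (sqrt (1 - t)) (sqrt t)) (diag_phase q),
     conjm (pure_quat (sqrt (1 - t)) (sqrt t)) (diag_phase p))"
  unfolding seg_quad_def by (simp only: conjm_pure_quat_diag_phase[OF sqrt_segment_norm])

lemma seg_quad_0: "seg_quad p q 0 = (diag_phase p, diag_phase q, diag_phase q, diag_phase p)"
  by (simp add: seg_quad_def rot_diag_1_0)

lemma seg_quad_1:
  "p * cnj p = 1 \<Longrightarrow> q * cnj q = 1 \<Longrightarrow>
     seg_quad p q 1 = (diag_phase p, diag_phase q, matrix_inv (diag_phase q), matrix_inv (diag_phase p))"
  by (simp add: seg_quad_def rot_diag_0_1 matrix_inv_diag_phase)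

lemma continuous_on_seg_quad: "continuous_on S (seg_quad p q)"
  unfolding seg_quad_def by (intro continuous_intros continuous_on_rot_diag)

lemma seg_quad_RepSp:
  assumes "p * cnj p = 1" "q * cnj q = 1" "t \<in> {0..1}"
  shows "seg_quad p q t \<in> RepSp"
  unfolding seg_quad_conv_conjm[OF assms(3)]
  using assms by (intro RepSp_conjm_swap SU2_pure_quat sqrt_segment_norm)
    (simp_all add: SU2_diag_phase_iff diag_phase_commute)

lemma trace_pairing_seg_quad:
  assumes p: "p * cnj p = 1" and q: "q * cnj q = 1" and t: "t \<in> {0..1}"
  shows "trace_pairing (seg_quad p q t) = 4 - 4 * (1 - t) * ((Im p)^2 + (Im q)^2)"
  using Re_trace2_diag_phase_rot_diag[OF p sqrt_segment_norm[OF t]]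
    Re_trace2_diag_phase_rot_diag[OF q sqrt_segment_norm[OF t]] t
  by (simp add: seg_quad_def trace_pairing_def algebra_simps)

lemma exists_unit_phase: "\<exists>e. e * cnj e = 1 \<and> e^2 * of_real (cmod w) = w"
proof (cases "w = 0")
  case True
  then show ?thesis by (intro exI[of _ 1]) simp
next
  case False
  define e where "e = csqrt (w / of_real (cmod w))"
  have "cmod e = 1" unfolding e_def using False by (simp add: norm_divide)
  then have "e * cnj e = 1" by (metis complex_norm_square mult.commute norm_one of_real_1 power_one)
  moreover have "e^2 * of_real (cmod w) = w" unfolding e_def using False by simp
  ultimately show ?thesis by blast
qed

lemma Iseg_diag_phase_eq_image:
  assumes p: "p * cnj p = 1" and q: "q * cnj q = 1"
  shows "Iseg (diag_phase p) (diag_phase q) = (\<lambda>t. cls (seg_quad p q t)) ` {0..1}"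
proof
  show "(\<lambda>t. cls (seg_quad p q t)) ` {0..1} \<subseteq> Iseg (diag_phase p) (diag_phase q)"
  proof (rule image_subsetI)
    fix t :: real assume "t \<in> {0..1}"
    then show "cls (seg_quad p q t) \<in> Iseg (diag_phase p) (diag_phase q)"
      unfolding Iseg_conv_conjm seg_quad_conv_conjm[OF \<open>t \<in> {0..1}\<close>]
      using SU2_pure_quat pure_quat_square sqrt_segment_norm by blast
  qed
next
  show "Iseg (diag_phase p) (diag_phase q) \<subseteq> (\<lambda>t. cls (seg_quad p q t)) ` {0..1}"
  proof
    fix c assume "c \<in> Iseg (diag_phase p) (diag_phase q)"
    then obtain k where k: "k \<in> SU2" "k ** k = - mat 1"
      and c: "c = cls (diag_phase p, diag_phase q, conjm k (diag_phase q), conjm k (diag_phase p))"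
      unfolding Iseg_conv_conjm by blast
    obtain x w where kx: "k = pure_quat x w" and xw: "x^2 + (cmod w)^2 = 1"
      using square_eq_minus_one_SU2[OF k] .
    define w' where "w' = (if x \<ge> 0 then w else - w)"
    have rot: "rot_diag x w r = rot_diag \<bar>x\<bar> w' r" for r
      unfolding w'_def using rot_diag_minus[of x w r] by auto
    define t where "t = (cmod w)^2"
    have "(cmod w)^2 \<le> 1" using xw zero_le_power2[of x] by linarith
    then have t: "t \<in> {0..1}" by (simp add: t_def)
    have "1 - t = x^2" using xw by (simp add: t_def)
    then have "sqrt (1 - t) = \<bar>x\<bar>" "sqrt t = cmod w'" by (simp_all add: t_def w'_def)
    moreover obtain e where e: "e * cnj e = 1" "e^2 * of_real (cmod w') = w'"
      using exists_unit_phase by blast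
    ultimately have "conjq (diag_phase e) (seg_quad p q t)
        = (diag_phase p, diag_phase q, rot_diag x w q, rot_diag x w p)"
      by (simp add: seg_quad_def conjm_diag_phase_diag_phase conjm_diag_phase_rot_diag rot)
    then have "cls (seg_quad p q t) = c"
      using cls_conjq[of "diag_phase e" "seg_quad p q t"] e(1)
      by (simp add: c kx conjm_pure_quat_diag_phase[OF xw] SU2_diag_phase_iff)
    then show "c \<in> (\<lambda>t. cls (seg_quad p q t)) ` {0..1}" using t by blast
  qed
qed

lemma Iseg_diag_phase_homeomorphic:
  assumes p: "p * cnj p = 1" and q: "q * cnj q = 1" and nontriv: "(Im p)^2 + (Im q)^2 > 0"
  shows "homeomorphic_map (top_of_set {0..1})
           (subtopology Mtop (Iseg (diag_phase p) (diag_phase q))) (\<lambda>t. cls (seg_quad p q t))"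
proof -
  define C where "C = (Im p)^2 + (Im q)^2"
  define param where "param c = 1 - (4 - trace_pairing_cls c) / (4 * C)" for c
  have "continuous_map (top_of_set {0..1}) (top_of_set RepSp) (seg_quad p q)"
    using continuous_on_seg_quad seg_quad_RepSp[OF p q] by (simp add: image_subset_iff)
  then have cont_f: "continuous_map (top_of_set {0..1}) Mtop (\<lambda>t. cls (seg_quad p q t))"
    using continuous_map_quotient_top[of "top_of_set RepSp" cls] unfolding Mtop_def
    by (rule continuous_map_compose[unfolded comp_def])
  have "continuous_map Mtop euclideanreal param"
    unfolding param_def using continuous_map_trace_pairing_cls
    by (intro continuous_intros) (use nontriv in \<open>auto simp: C_def\<close>)
  moreover have "param (cls (seg_quad p q t)) = t" if "t \<in> {0..1}" for t
    using nontriv unfolding param_def trace_pairing_cls_cls trace_pairing_seg_quad[OF p q that] C_def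
    by (simp add: field_simps)
  ultimately show ?thesis
    unfolding Iseg_diag_phase_eq_image[OF p q]
    by (intro homeomorphic_map_onto_image_left_inverse[OF cont_f]) auto
qed

lemma seg_quad_interior_notin_P1_P2:
  assumes p: "p * cnj p = 1" and q: "q * cnj q = 1" and nontriv: "(Im p)^2 + (Im q)^2 > 0"
    and t: "t \<in> {0<..<1}"
  shows "cls (seg_quad p q t) \<notin> P1 \<union> P2"
proof
  have t': "t \<in> {0..1}" using t by simp
  have injective: "t = s" if "s \<in> {0..1}" "trace_pairing (seg_quad p q t) = trace_pairing (seg_quad p q s)"
    for s
    using that nontriv
    by (auto simp: trace_pairing_seg_quad[OF p q t'] trace_pairing_seg_quad[OF p q that(1)])
  assume "cls (seg_quad p q t) \<in> P1 \<union> P2"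
  then have "seg_quad p q t = seg_quad p q 0 \<or> seg_quad p q t = seg_quad p q 1"
    using cls_in_P1_imp cls_in_P2_imp
    unfolding seg_quad_0 seg_quad_1[OF p q] by (auto simp add: seg_quad_def)
  then have "t = 0 \<or> t = 1" using injective[of 0] injective[of 1] by auto
  with t show False by simp
qed

lemma Iseg_noncentral_homeomorphic:
  assumes g: "g \<in> SU2" and h: "h \<in> SU2" and gh: "g ** h = h ** g"
    and noncentral: "\<not> ((g = mat 1 \<or> g = - mat 1) \<and> (h = mat 1 \<or> h = - mat 1))"
  obtains f :: "real \<Rightarrow> quad set"
  where "homeomorphic_map (top_of_set {0..1}) (subtopology Mtop (Iseg g h)) f"
    "f 0 = cls (g, h, h, g)" "f 1 = cls (g, h, matrix_inv h, matrix_inv g)"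
    "\<forall>t \<in> {0<..<1}. f t \<notin> P1 \<union> P2"
proof -
  obtain u p q where u: "u \<in> SU2" and p: "p * cnj p = 1" and q: "q * cnj q = 1"
    and g_eq: "g = conjm u (diag_phase p)" and h_eq: "h = conjm u (diag_phase q)"
    using commuting_SU2_conj_diag_phase[OF g h gh] .
  have nontriv: "(Im p)^2 + (Im q)^2 > 0"
  proof (rule ccontr)
    assume "\<not> (Im p)^2 + (Im q)^2 > 0"
    then have "Im p = 0" "Im q = 0" by (simp_all add: sum_power2_gt_zero_iff)
    then have "(p = 1 \<or> p = -1) \<and> (q = 1 \<or> q = -1)" using unit_complex_real p q by blast
    then show False
      using noncentral conjm_central[OF u] unfolding g_eq h_eq by (auto simp: diag_phase_one)
  qed
  have f0: "(g, h, h, g) = conjq u (seg_quad p q 0)"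
    unfolding seg_quad_0 g_eq h_eq by simp
  have f1: "(g, h, matrix_inv h, matrix_inv g) = conjq u (seg_quad p q 1)"
    unfolding seg_quad_1[OF p q] g_eq h_eq
    using p q by (simp add: conjm_matrix_inv[OF u] SU2_diag_phase_iff)
  have Iseg_eq: "Iseg g h = Iseg (diag_phase p) (diag_phase q)"
    unfolding g_eq h_eq by (rule Iseg_conjm[OF u])
  show thesis
  proof (rule that)
    show "homeomorphic_map (top_of_set {0..1}) (subtopology Mtop (Iseg g h))
        (\<lambda>t. cls (seg_quad p q t))"
      unfolding Iseg_eq by (rule Iseg_diag_phase_homeomorphic[OF p q nontriv])
    show "\<forall>t \<in> {0<..<1}. cls (seg_quad p q t) \<notin> P1 \<union> P2"
      using seg_quad_interior_notin_P1_P2[OF p q nontriv] by blast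
  qed (simp_all add: f0 f1 cls_conjq[OF u])
qed

lemma Iseg_central:
  assumes "g = mat 1 \<or> g = - mat 1" and "h = mat 1 \<or> h = - mat 1"
  shows "Iseg g h = {cls (g, h, h, g)}"
proof -
  have fixed: "conjm k g = g" "conjm k h = h" if "k \<in> SU2" for k
    using assms conjm_central[OF that] by auto
  have "pure_quat 1 0 \<in> SU2" "pure_quat 1 0 ** pure_quat 1 0 = - mat 1"
    using SU2_pure_quat[of 1 0] pure_quat_square[of 1 0] by simp_all
  then show ?thesis unfolding Iseg_conv_conjm using fixed by force
qed

theorem mainTheorem14:
  fixes g h :: cmat
  assumes "g \<in> SU2" and "h \<in> SU2" and "comm g h = mat 1"
  shows "((g, h) \<notin> {(s, t). (s = mat 1 \<or> s = - mat 1) \<and> (t = mat 1 \<or> t = - mat 1)} \<longrightarrow>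
            (\<exists>f :: real \<Rightarrow> quad set.
               homeomorphic_map (top_of_set {0..1}) (subtopology Mtop (Iseg g h)) f \<and>
               f 0 = cls (g, h, h, g) \<and> f 0 \<in> P1 \<and>
               f 1 = cls (g, h, matrix_inv h, matrix_inv g) \<and> f 1 \<in> P2 \<and>
               (\<forall>t \<in> {0<..<1}. f t \<notin> P1 \<union> P2)))
       \<and> ((g, h) \<in> {(s, t). (s = mat 1 \<or> s = - mat 1) \<and> (t = mat 1 \<or> t = - mat 1)} \<longrightarrow>
            (\<exists>p \<in> {cls (mat 1, mat 1, mat 1, mat 1), cls (mat 1, - mat 1, - mat 1, mat 1),
                    cls (- mat 1, mat 1, mat 1, - mat 1), cls (- mat 1, - mat 1, - mat 1, - mat 1)}.
               Iseg g h = {p}))"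
proof (intro conjI impI)
  assume "(g, h) \<notin> {(s, t). (s = mat 1 \<or> s = - mat 1) \<and> (t = mat 1 \<or> t = - mat 1)}"
  then have noncentral: "\<not> ((g = mat 1 \<or> g = - mat 1) \<and> (h = mat 1 \<or> h = - mat 1))" by simp
  have gh: "g ** h = h ** g" using assms comm_eq_one_iff by blast
  obtain f :: "real \<Rightarrow> quad set"
    where "homeomorphic_map (top_of_set {0..1}) (subtopology Mtop (Iseg g h)) f"
      "f 0 = cls (g, h, h, g)" "f 1 = cls (g, h, matrix_inv h, matrix_inv g)"
      "\<forall>t \<in> {0<..<1}. f t \<notin> P1 \<union> P2"
    by (rule Iseg_noncentral_homeomorphic[OF assms(1,2) gh noncentral])
  moreover have "cls (g, h, h, g) \<in> P1" "cls (g, h, matrix_inv h, matrix_inv g) \<in> P2"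
    unfolding P1_def P2_def using assms by auto
  ultimately show "\<exists>f :: real \<Rightarrow> quad set.
      homeomorphic_map (top_of_set {0..1}) (subtopology Mtop (Iseg g h)) f \<and>
      f 0 = cls (g, h, h, g) \<and> f 0 \<in> P1 \<and>
      f 1 = cls (g, h, matrix_inv h, matrix_inv g) \<and> f 1 \<in> P2 \<and>
      (\<forall>t \<in> {0<..<1}. f t \<notin> P1 \<union> P2)" by auto
next
  assume "(g, h) \<in> {(s, t). (s = mat 1 \<or> s = - mat 1) \<and> (t = mat 1 \<or> t = - mat 1)}"
  then have "g = mat 1 \<or> g = - mat 1" "h = mat 1 \<or> h = - mat 1" by simp_all
  then show "\<exists>p \<in> {cls (mat 1, mat 1, mat 1, mat 1), cls (mat 1, - mat 1, - mat 1, mat 1),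
      cls (- mat 1, mat 1, mat 1, - mat 1), cls (- mat 1, - mat 1, - mat 1, - mat 1)}.
      Iseg g h = {p}"
    using Iseg_central by (elim disjE) simp_all
qed

end
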